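(* Let $G$ be a two-player stage game with $|V_1^{p,p}|=1$ and $|V_2^{p,p}|>1$. If $G\notin\mathcal{G}_{LS}^{p,p}$, then $G\notin\mathcal{G}_{LS}^{m,p}$.
   Context: A two-player stage game $G$ has finite nonempty action sets $A_1,A_2$ and payoffs $u_1,u_2:A_1\times A_2\to\mathbb{R}$, extended to mixed strategies by expectation. $G(T)$ is the $T$-round repetition with realized actions observed each round and payoffs the expected sum of stage payoffs; an SPE of $G(T)$ is a strategy profile whose continuation after every history of length $k<T$ is a Nash equilibrium of $G(T-k)$. Regimes: pure-pure ($p,p$): both players restricted to actions (in the stage game and in every round, including deviations); mixed-pure ($m,p$): player 1 may mix, player 2 uses only actions; mixed-mixed ($m,m$): both may mix. For regime $r$, $\mathrm{Nash}^r(G)$ is the set of stage-game profiles available in $r$ from which no player can profitably deviate unilaterally to a strategy available in $r$, and $V_i^r=\{u_i(\sigma):\sigma\in\mathrm{Nash}^r(G)\}$. Locally suboptimal behavior occurs in an SPE $\mu$ of $G(T)$ (regime $r$) if for some history $h$ of length $k<T$, $(\mu_1(h),\mu_2(h))\notin\mathrm{Nash}^r(G)$. $\mathcal{G}_{LS}^r$ is the set of stage games $G$ for which there exist $T\ge1$ and an SPE of $G(T)$ in regime $r$ in which locally suboptimal behavior occurs. *)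

theory Defs
  imports Complex_Main
begin

datatype regime = PP | MP | MM

definition mixed :: "'x set \<Rightarrow> ('x \<Rightarrow> real) \<Rightarrow> bool" where
  "mixed A \<sigma> \<longleftrightarrow> (\<forall>x. 0 \<le> \<sigma> x) \<and> (\<forall>x. x \<notin> A \<longrightarrow> \<sigma> x = 0) \<and> sum \<sigma> A = 1"

definition pure_strat :: "'x set \<Rightarrow> ('x \<Rightarrow> real) \<Rightarrow> bool" where
  "pure_strat A \<sigma> \<longleftrightarrow> (\<exists>a\<in>A. \<sigma> = (\<lambda>x. if x = a then 1 else 0))"

definition avail1 :: "regime \<Rightarrow> 'a set \<Rightarrow> ('a \<Rightarrow> real) \<Rightarrow> bool" where
  "avail1 r A \<sigma> = (if r = PP then pure_strat A \<sigma> else mixed A \<sigma>)"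

definition avail2 :: "regime \<Rightarrow> 'b set \<Rightarrow> ('b \<Rightarrow> real) \<Rightarrow> bool" where
  "avail2 r B \<tau> = (if r = MM then mixed B \<tau> else pure_strat B \<tau>)"

definition EU :: "'a set \<Rightarrow> 'b set \<Rightarrow> ('a \<Rightarrow> 'b \<Rightarrow> real) \<Rightarrow> ('a \<Rightarrow> real) \<Rightarrow> ('b \<Rightarrow> real) \<Rightarrow> real" where
  "EU A B u \<sigma> \<tau> = (\<Sum>a\<in>A. \<Sum>b\<in>B. \<sigma> a * \<tau> b * u a b)"

definition stage_nash :: "regime \<Rightarrow> 'a set \<Rightarrow> 'b set \<Rightarrow> ('a \<Rightarrow> 'b \<Rightarrow> real) \<Rightarrow> ('a \<Rightarrow> 'b \<Rightarrow> real)
    \<Rightarrow> ('a \<Rightarrow> real) \<Rightarrow> ('b \<Rightarrow> real) \<Rightarrow> bool" where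
  "stage_nash r A B u1 u2 \<sigma> \<tau> \<longleftrightarrow> avail1 r A \<sigma> \<and> avail2 r B \<tau> \<and>
     (\<forall>\<sigma>'. avail1 r A \<sigma>' \<longrightarrow> EU A B u1 \<sigma>' \<tau> \<le> EU A B u1 \<sigma> \<tau>) \<and>
     (\<forall>\<tau>'. avail2 r B \<tau>' \<longrightarrow> EU A B u2 \<sigma> \<tau>' \<le> EU A B u2 \<sigma> \<tau>)"

definition V1 :: "regime \<Rightarrow> 'a set \<Rightarrow> 'b set \<Rightarrow> ('a \<Rightarrow> 'b \<Rightarrow> real) \<Rightarrow> ('a \<Rightarrow> 'b \<Rightarrow> real) \<Rightarrow> real set" where
  "V1 r A B u1 u2 = {EU A B u1 \<sigma> \<tau> | \<sigma> \<tau>. stage_nash r A B u1 u2 \<sigma> \<tau>}"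

definition V2 :: "regime \<Rightarrow> 'a set \<Rightarrow> 'b set \<Rightarrow> ('a \<Rightarrow> 'b \<Rightarrow> real) \<Rightarrow> ('a \<Rightarrow> 'b \<Rightarrow> real) \<Rightarrow> real set" where
  "V2 r A B u1 u2 = {EU A B u2 \<sigma> \<tau> | \<sigma> \<tau>. stage_nash r A B u1 u2 \<sigma> \<tau>}"

text \<open>Repeated game: histories are lists of realized action profiles; (behavioural)
  strategies map histories to stage strategies.\<close>
type_synonym ('a,'b) hist = "('a \<times> 'b) list"

definition is_hist :: "'a set \<Rightarrow> 'b set \<Rightarrow> ('a,'b) hist \<Rightarrow> bool" where
  "is_hist A B h \<longleftrightarrow> set h \<subseteq> A \<times> B"

primrec rval :: "'a set \<Rightarrow> 'b set \<Rightarrow> ('a \<Rightarrow> 'b \<Rightarrow> real) \<Rightarrow> (('a,'b) hist \<Rightarrow> 'a \<Rightarrow> real)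
    \<Rightarrow> (('a,'b) hist \<Rightarrow> 'b \<Rightarrow> real) \<Rightarrow> nat \<Rightarrow> ('a,'b) hist \<Rightarrow> real" where
  "rval A B u s1 s2 0 h = 0"
| "rval A B u s1 s2 (Suc n) h =
     (\<Sum>a\<in>A. \<Sum>b\<in>B. s1 h a * s2 h b * (u a b + rval A B u s1 s2 n (h @ [(a, b)])))"

definition strat1 :: "regime \<Rightarrow> 'a set \<Rightarrow> 'b set \<Rightarrow> nat \<Rightarrow> (('a,'b) hist \<Rightarrow> 'a \<Rightarrow> real) \<Rightarrow> bool" where
  "strat1 r A B n s \<longleftrightarrow> (\<forall>h. is_hist A B h \<and> length h < n \<longrightarrow> avail1 r A (s h))"

definition strat2 :: "regime \<Rightarrow> 'a set \<Rightarrow> 'b set \<Rightarrow> nat \<Rightarrow> (('a,'b) hist \<Rightarrow> 'b \<Rightarrow> real) \<Rightarrow> bool" where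
  "strat2 r A B n s \<longleftrightarrow> (\<forall>h. is_hist A B h \<and> length h < n \<longrightarrow> avail2 r B (s h))"

definition rep_nash :: "regime \<Rightarrow> 'a set \<Rightarrow> 'b set \<Rightarrow> ('a \<Rightarrow> 'b \<Rightarrow> real) \<Rightarrow> ('a \<Rightarrow> 'b \<Rightarrow> real) \<Rightarrow> nat
    \<Rightarrow> (('a,'b) hist \<Rightarrow> 'a \<Rightarrow> real) \<Rightarrow> (('a,'b) hist \<Rightarrow> 'b \<Rightarrow> real) \<Rightarrow> bool" where
  "rep_nash r A B u1 u2 n s1 s2 \<longleftrightarrow> strat1 r A B n s1 \<and> strat2 r A B n s2 \<and>
     (\<forall>s1'. strat1 r A B n s1' \<longrightarrow> rval A B u1 s1' s2 n [] \<le> rval A B u1 s1 s2 n []) \<and>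
     (\<forall>s2'. strat2 r A B n s2' \<longrightarrow> rval A B u2 s1 s2' n [] \<le> rval A B u2 s1 s2 n [])"

definition cont :: "(('a,'b) hist \<Rightarrow> 'c) \<Rightarrow> ('a,'b) hist \<Rightarrow> (('a,'b) hist \<Rightarrow> 'c)" where
  "cont s h = (\<lambda>h'. s (h @ h'))"

definition SPE :: "regime \<Rightarrow> 'a set \<Rightarrow> 'b set \<Rightarrow> ('a \<Rightarrow> 'b \<Rightarrow> real) \<Rightarrow> ('a \<Rightarrow> 'b \<Rightarrow> real) \<Rightarrow> nat
    \<Rightarrow> (('a,'b) hist \<Rightarrow> 'a \<Rightarrow> real) \<Rightarrow> (('a,'b) hist \<Rightarrow> 'b \<Rightarrow> real) \<Rightarrow> bool" where
  "SPE r A B u1 u2 T s1 s2 \<longleftrightarrow> (\<forall>h. is_hist A B h \<and> length h < T \<longrightarrow>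
      rep_nash r A B u1 u2 (T - length h) (cont s1 h) (cont s2 h))"

definition in_GLS :: "regime \<Rightarrow> 'a set \<Rightarrow> 'b set \<Rightarrow> ('a \<Rightarrow> 'b \<Rightarrow> real) \<Rightarrow> ('a \<Rightarrow> 'b \<Rightarrow> real) \<Rightarrow> bool" where
  "in_GLS r A B u1 u2 \<longleftrightarrow> (\<exists>T\<ge>1. \<exists>s1 s2. SPE r A B u1 u2 T s1 s2 \<and>
      (\<exists>h. is_hist A B h \<and> length h < T \<and> \<not> stage_nash r A B u1 u2 (s1 h) (s2 h)))"

end

theory Submission
  imports Defs
begin

text \<open>Let \<open>v\<close> be the unique pure-equilibrium payoff of player 1. If some pure profile
  \<open>(a0, b0)\<close> with \<open>a0\<close> a best reply to \<open>b0\<close> were not a Nash equilibrium, player 2 could be kept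
  from deviating from \<open>b0\<close> in the first round by the threat of switching from the pure
  equilibrium she prefers to one she likes less (two such equilibria exist as
  \<open>|V_2^{p,p}| > 1\<close>); this would be a pure SPE with locally suboptimal behaviour. So every
  player-1 best reply to a pure action is part of a pure equilibrium, with payoff \<open>v\<close> to player 1.
  By backward induction, in a mixed-pure SPE the continuation payoff of player 1 after every
  history is \<open>v\<close> times the number of remaining rounds, independently of the current actions.
  Hence player 1's stage strategy is a stage best reply to player 2's pure action \<open>b\<close>, its
  support consists of best replies to \<open>b\<close>, and \<open>b\<close> is a best reply to each of them: the stage
  profile is a mixed-pure Nash equilibrium.\<close>

lemma card_gt_1_obtain_less:
  fixes S :: "'x :: linorder set"
  assumes "1 < card S"
  obtains x y where "x \<in> S" "y \<in> S" "x < y"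
proof -
  obtain x y where "x \<in> S" "y \<in> S" "x \<noteq> y"
    using assms by (metis One_nat_def card.infinite card_le_Suc0_iff_eq not_le not_less_zero)
  then show thesis using that by (metis neq_iff)
qed

definition pure_at :: "'x \<Rightarrow> 'x \<Rightarrow> real" where
  "pure_at a = (\<lambda>x. if x = a then 1 else 0)"

lemma pure_strat_iff: "pure_strat A \<sigma> \<longleftrightarrow> (\<exists>a\<in>A. \<sigma> = pure_at a)"
  by (simp add: pure_strat_def pure_at_def)

lemma pure_at_eq_iff [simp]: "pure_at a = pure_at b \<longleftrightarrow> a = b"
  by (metis pure_at_def zero_neq_one)

lemma sum_pure_at_mult [simp]:
  "finite A \<Longrightarrow> a \<in> A \<Longrightarrow> (\<Sum>x\<in>A. pure_at a x * f x) = f a"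
proof -
  assume "finite A" "a \<in> A"
  then have "(\<Sum>x\<in>A. pure_at a x * f x) = (\<Sum>x\<in>A. if x = a then f x else 0)"
    by (intro sum.cong) (auto simp: pure_at_def)
  then show ?thesis using \<open>finite A\<close> \<open>a \<in> A\<close> by simp
qed

lemma sum_mult_pure_at_mult [simp]:
  "finite A \<Longrightarrow> a \<in> A \<Longrightarrow> (\<Sum>x\<in>A. c * pure_at a x * f x) = c * f a"
  by (simp add: mult.assoc flip: sum_distrib_left)

lemma mixed_pure_at: "finite A \<Longrightarrow> a \<in> A \<Longrightarrow> mixed A (pure_at a)"
  using sum_pure_at_mult[of A a "\<lambda>_. 1"] by (auto simp: mixed_def pure_at_def)

lemma mixed_if_pure_strat: "finite A \<Longrightarrow> pure_strat A \<sigma> \<Longrightarrow> mixed A \<sigma>"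
  by (auto simp: pure_strat_iff mixed_pure_at)

lemma EU_pure_right:
  "finite B \<Longrightarrow> b \<in> B \<Longrightarrow> EU A B u \<sigma> (pure_at b) = (\<Sum>x\<in>A. \<sigma> x * u x b)"
  by (simp add: EU_def)

lemma EU_pure:
  "finite A \<Longrightarrow> finite B \<Longrightarrow> a \<in> A \<Longrightarrow> b \<in> B \<Longrightarrow> EU A B u (pure_at a) (pure_at b) = u a b"
  by (simp add: EU_pure_right)

lemma mixed_support_nonempty:
  assumes "mixed A \<sigma>" obtains x where "x \<in> A" "0 < \<sigma> x"
proof -
  have "\<not> (\<forall>x\<in>A. \<sigma> x = 0)" using assms by (metis mixed_def sum.neutral zero_neq_one)
  with assms that show thesis by (force simp: mixed_def order_le_less)
qed

lemma mixed_support_maximizes: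
  assumes "finite A" "mixed A \<sigma>" and le: "\<forall>a\<in>A. f a \<le> (\<Sum>y\<in>A. \<sigma> y * f y)"
    and "x \<in> A" "0 < \<sigma> x"
  shows "f x = (\<Sum>y\<in>A. \<sigma> y * f y)"
proof -
  define E where "E = (\<Sum>y\<in>A. \<sigma> y * f y)"
  have "(\<Sum>y\<in>A. \<sigma> y * (E - f y)) = (\<Sum>y\<in>A. \<sigma> y) * E - E"
    by (simp add: E_def right_diff_distrib sum_subtractf sum_distrib_right)
  also have "\<dots> = 0" using assms(2) by (simp add: mixed_def)
  finally have "\<forall>y\<in>A. \<sigma> y * (E - f y) = 0"
    using assms(2) le by (subst sum_nonneg_eq_0_iff[OF assms(1), symmetric])
      (auto simp: mixed_def E_def)
  then show ?thesis using assms(4,5) by (force simp: E_def)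
qed

definition best_reply1 :: "'a set \<Rightarrow> ('a \<Rightarrow> 'b \<Rightarrow> real) \<Rightarrow> 'b \<Rightarrow> 'a \<Rightarrow> bool" where
  "best_reply1 A u b a \<longleftrightarrow> a \<in> A \<and> (\<forall>a'\<in>A. u a' b \<le> u a b)"

definition best_reply2 :: "'b set \<Rightarrow> ('a \<Rightarrow> 'b \<Rightarrow> real) \<Rightarrow> 'a \<Rightarrow> 'b \<Rightarrow> bool" where
  "best_reply2 B u a b \<longleftrightarrow> b \<in> B \<and> (\<forall>b'\<in>B. u a b' \<le> u a b)"

lemma all_pure_strat_iff: "(\<forall>\<sigma>. pure_strat A \<sigma> \<longrightarrow> P \<sigma>) \<longleftrightarrow> (\<forall>a\<in>A. P (pure_at a))"
  by (auto simp: pure_strat_iff)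

lemma stage_nash_PP_iff:
  assumes "finite A" "finite B"
  shows "stage_nash PP A B u1 u2 \<sigma> \<tau> \<longleftrightarrow>
    (\<exists>a b. \<sigma> = pure_at a \<and> \<tau> = pure_at b \<and> best_reply1 A u1 b a \<and> best_reply2 B u2 a b)"
  using assms
  by (simp add: stage_nash_def avail1_def avail2_def all_pure_strat_iff)
    (auto simp: pure_strat_iff best_reply1_def best_reply2_def EU_pure)

lemma best_reply_mem:
  "best_reply1 A u1 b a \<Longrightarrow> a \<in> A" "best_reply2 B u2 a b \<Longrightarrow> b \<in> B"
  by (simp_all add: best_reply1_def best_reply2_def)

lemma V1_PP: "finite A \<Longrightarrow> finite B \<Longrightarrow>
    V1 PP A B u1 u2 = {u1 a b | a b. best_reply1 A u1 b a \<and> best_reply2 B u2 a b}"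
  unfolding V1_def
  by (auto simp: stage_nash_PP_iff EU_pure best_reply_mem) (blast | metis EU_pure best_reply_mem)+

lemma V2_PP: "finite A \<Longrightarrow> finite B \<Longrightarrow>
    V2 PP A B u1 u2 = {u2 a b | a b. best_reply1 A u1 b a \<and> best_reply2 B u2 a b}"
  unfolding V2_def
  by (auto simp: stage_nash_PP_iff EU_pure best_reply_mem) (blast | metis EU_pure best_reply_mem)+

lemma stage_nash_MP_if_support_best_replies:
  assumes "finite A" "finite B" "mixed A \<sigma>" "b \<in> B"
    and br: "\<And>x. x \<in> A \<Longrightarrow> 0 < \<sigma> x \<Longrightarrow> best_reply1 A u1 b x \<and> best_reply2 B u2 x b"
  shows "stage_nash MP A B u1 u2 \<sigma> (pure_at b)"
  unfolding stage_nash_def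
proof (intro conjI allI impI)
  show "avail1 MP A \<sigma>" "avail2 MP B (pure_at b)"
    using assms(3,4) by (auto simp: avail1_def avail2_def pure_strat_iff)
  have \<sigma>_nonneg: "0 \<le> \<sigma> x" for x using assms(3) by (simp add: mixed_def)
  obtain x0 where x0: "x0 \<in> A" "0 < \<sigma> x0" using assms(3) by (rule mixed_support_nonempty)
  have "u1 x b = u1 x0 b" if "x \<in> A" "0 < \<sigma> x" for x
    using br[OF that] br[OF x0] by (simp add: best_reply1_def order_antisym)
  then have "(\<Sum>x\<in>A. \<sigma> x * u1 x b) = (\<Sum>x\<in>A. \<sigma> x * u1 x0 b)"
    using \<sigma>_nonneg by (intro sum.cong) (auto simp: order_le_less)
  also have "\<dots> = u1 x0 b" using assms(3) by (simp add: mixed_def flip: sum_distrib_right)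
  finally have value1: "EU A B u1 \<sigma> (pure_at b) = u1 x0 b"
    using assms by (simp add: EU_pure_right)
  fix \<sigma>' assume "avail1 MP A \<sigma>'"
  then have "mixed A \<sigma>'" by (simp add: avail1_def)
  have "EU A B u1 \<sigma>' (pure_at b) = (\<Sum>x\<in>A. \<sigma>' x * u1 x b)"
    using assms by (simp add: EU_pure_right)
  also have "\<dots> \<le> (\<Sum>x\<in>A. \<sigma>' x * u1 x0 b)"
    using \<open>mixed A \<sigma>'\<close> br[OF x0]
    by (intro sum_mono mult_left_mono) (auto simp: mixed_def best_reply1_def)
  also have "\<dots> = u1 x0 b" using \<open>mixed A \<sigma>'\<close> by (simp add: mixed_def flip: sum_distrib_right)
  finally show "EU A B u1 \<sigma>' (pure_at b) \<le> EU A B u1 \<sigma> (pure_at b)" using value1 by simp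
next
  fix \<tau>' assume "avail2 MP B \<tau>'"
  then obtain b' where b': "b' \<in> B" "\<tau>' = pure_at b'" by (auto simp: avail2_def pure_strat_iff)
  have "u2 x b' \<le> u2 x b" if "x \<in> A" "0 < \<sigma> x" for x
    using br[OF that] b' by (simp add: best_reply2_def)
  then have "(\<Sum>x\<in>A. \<sigma> x * u2 x b') \<le> (\<Sum>x\<in>A. \<sigma> x * u2 x b)"
    using assms(3) by (intro sum_mono) (force simp: mixed_def order_le_less)
  then show "EU A B u2 \<sigma> \<tau>' \<le> EU A B u2 \<sigma> (pure_at b)"
    using assms b' by (simp add: EU_pure_right)
qed

declare rval.simps(2) [simp del]

lemma is_hist_Nil [simp]: "is_hist A B []"
  by (simp add: is_hist_def)

lemma is_hist_Cons [simp]: "is_hist A B ((a, b) # h) \<longleftrightarrow> a \<in> A \<and> b \<in> B \<and> is_hist A B h"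
  by (simp add: is_hist_def)

lemma is_hist_append [simp]: "is_hist A B (h @ h') \<longleftrightarrow> is_hist A B h \<and> is_hist A B h'"
  by (auto simp: is_hist_def)

lemma cont_Nil [simp]: "cont s [] = s"
  by (simp add: cont_def)

lemma rval_cont: "rval A B u (cont s1 h) (cont s2 h) m h' = rval A B u s1 s2 m (h @ h')"
  by (induction m arbitrary: h') (simp_all add: cont_def rval.simps)

lemma rval_cong:
  assumes "\<And>h'. s1 (h @ h') = t1 (h @ h')" "\<And>h'. s2 (h @ h') = t2 (h @ h')"
  shows "rval A B u s1 s2 m h = rval A B u t1 t2 m h"
  using assms
proof (induction m arbitrary: h)
  case (Suc m)
  have "s1 h = t1 h" "s2 h = t2 h" using Suc.prems[of "[]"] by simp_all
  with Suc.IH[of "h @ [_]"] Suc.prems show ?case by (simp add: rval.simps)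
qed simp

lemma rval_Suc_pure_right:
  "finite B \<Longrightarrow> b \<in> B \<Longrightarrow> s2 h = pure_at b \<Longrightarrow>
    rval A B u s1 s2 (Suc m) h = (\<Sum>x\<in>A. s1 h x * (u x b + rval A B u s1 s2 m (h @ [(x, b)])))"
  by (simp add: rval.simps)

lemma rval_Suc_pure:
  "finite A \<Longrightarrow> finite B \<Longrightarrow> a \<in> A \<Longrightarrow> b \<in> B \<Longrightarrow> s1 h = pure_at a \<Longrightarrow> s2 h = pure_at b \<Longrightarrow>
    rval A B u s1 s2 (Suc m) h = u a b + rval A B u s1 s2 m (h @ [(a, b)])"
  by (simp add: rval_Suc_pure_right)

lemma rval_constant:
  assumes "finite A" "finite B" "a \<in> A" "b \<in> B"
    and "\<And>h'. s1 (h @ h') = pure_at a" "\<And>h'. s2 (h @ h') = pure_at b"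
  shows "rval A B u s1 s2 m h = real m * u a b"
  using assms(5,6)
proof (induction m arbitrary: h)
  case (Suc m)
  have "s1 h = pure_at a" "s2 h = pure_at b" using Suc.prems[of "[]"] by simp_all
  then have "rval A B u s1 s2 (Suc m) h = u a b + rval A B u s1 s2 m (h @ [(a, b)])"
    using assms(1-4) by (intro rval_Suc_pure)
  also have "\<dots> = u a b + real m * u a b" using Suc.IH[of "h @ [(a, b)]"] Suc.prems by simp
  finally show ?case by (simp add: algebra_simps)
qed simp

lemma rval_le:
  assumes "finite A" "finite B"
    and "\<And>h'. is_hist A B h' \<Longrightarrow> length h' < m \<Longrightarrow> mixed A (s1 (h @ h')) \<and> mixed B (s2 (h @ h'))"
    and "\<And>h' a b. is_hist A B h' \<Longrightarrow> length h' < m \<Longrightarrow> a \<in> A \<Longrightarrow> b \<in> B \<Longrightarrow>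
      s1 (h @ h') a \<noteq> 0 \<Longrightarrow> s2 (h @ h') b \<noteq> 0 \<Longrightarrow> u a b \<le> c"
  shows "rval A B u s1 s2 m h \<le> real m * c"
  using assms(3,4)
proof (induction m arbitrary: h)
  case (Suc m)
  have mixed: "mixed A (s1 h)" "mixed B (s2 h)" using Suc.prems(1)[of "[]"] by simp_all
  have IH: "rval A B u s1 s2 m (h @ [(a, b)]) \<le> real m * c" if "a \<in> A" "b \<in> B" for a b
  proof (rule Suc.IH)
    fix h' assume "is_hist A B h'" "length h' < m"
    then show "mixed A (s1 ((h @ [(a, b)]) @ h')) \<and> mixed B (s2 ((h @ [(a, b)]) @ h'))"
      using Suc.prems(1)[of "(a, b) # h'"] that by simp
  next
    fix h' a' b' assume "is_hist A B h'" "length h' < m" "a' \<in> A" "b' \<in> B"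
      "s1 ((h @ [(a, b)]) @ h') a' \<noteq> 0" "s2 ((h @ [(a, b)]) @ h') b' \<noteq> 0"
    then show "u a' b' \<le> c" using Suc.prems(2)[of "(a, b) # h'" a' b'] that by simp
  qed
  have stage: "u a b \<le> c" if "a \<in> A" "b \<in> B" "s1 h a * s2 h b \<noteq> 0" for a b
    using that Suc.prems(2)[of "[]"] by simp
  have "rval A B u s1 s2 (Suc m) h \<le>
      (\<Sum>a\<in>A. \<Sum>b\<in>B. s1 h a * s2 h b * (c + real m * c))"
    unfolding rval.simps
  proof (intro sum_mono)
    fix a b assume "a \<in> A" "b \<in> B"
    have "0 \<le> s1 h a * s2 h b" using mixed by (simp add: mixed_def)
    then show "s1 h a * s2 h b * (u a b + rval A B u s1 s2 m (h @ [(a, b)]))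
        \<le> s1 h a * s2 h b * (c + real m * c)"
    proof (cases "s1 h a * s2 h b = 0")
      case False
      then show ?thesis using \<open>0 \<le> s1 h a * s2 h b\<close> stage IH \<open>a \<in> A\<close> \<open>b \<in> B\<close>
        by (intro mult_left_mono add_mono) auto
    qed auto
  qed
  also have "\<dots> = sum (s1 h) A * sum (s2 h) B * (c + real m * c)"
    by (simp only: sum_distrib_left sum_distrib_right) (rule sum.swap)
  also have "\<dots> = real (Suc m) * c" using mixed by (simp add: mixed_def algebra_simps)
  finally show ?case .
qed simp

lemma mixed_if_strat1:
  "finite A \<Longrightarrow> strat1 r A B n s \<Longrightarrow> is_hist A B h \<Longrightarrow> length h < n \<Longrightarrow> mixed A (s h)"
  by (auto simp: strat1_def avail1_def mixed_if_pure_strat split: if_splits)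

lemma mixed_if_strat2:
  "finite B \<Longrightarrow> strat2 r A B n s \<Longrightarrow> is_hist A B h \<Longrightarrow> length h < n \<Longrightarrow> mixed B (s h)"
  by (auto simp: strat2_def avail2_def mixed_if_pure_strat split: if_splits)

lemma strat1_cont: "strat1 r A B n s \<Longrightarrow> is_hist A B h \<Longrightarrow> strat1 r A B (n - length h) (cont s h)"
  by (force simp: strat1_def cont_def)

lemma strat2_cont: "strat2 r A B n s \<Longrightarrow> is_hist A B h \<Longrightarrow> strat2 r A B (n - length h) (cont s h)"
  by (force simp: strat2_def cont_def)

lemma pure_at_nonzero_iff: "pure_at a x \<noteq> 0 \<longleftrightarrow> x = a"
  by (simp add: pure_at_def)

lemma rval_le_pure_right:
  assumes "finite A" "finite B" "b \<in> B" "\<forall>a\<in>A. u a b \<le> c" "strat1 r A B m s1"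
  shows "rval A B u s1 (\<lambda>_. pure_at b) m [] \<le> real m * c"
  using assms by (intro rval_le) (auto simp: mixed_if_strat1 mixed_pure_at pure_at_nonzero_iff)

lemma rval_le_pure_left:
  assumes "finite A" "finite B" "a \<in> A" "\<forall>b\<in>B. u a b \<le> c" "strat2 r A B m s2"
  shows "rval A B u (\<lambda>_. pure_at a) s2 m [] \<le> real m * c"
  using assms by (intro rval_le) (auto simp: mixed_if_strat2 mixed_pure_at pure_at_nonzero_iff)

lemma rep_nash_PP_repeat:
  assumes "finite A" "finite B" "best_reply1 A u1 b a" "best_reply2 B u2 a b"
  shows "rep_nash PP A B u1 u2 m (\<lambda>_. pure_at a) (\<lambda>_. pure_at b)"
  unfolding rep_nash_def
proof (intro conjI allI impI)
  have mem: "a \<in> A" "b \<in> B" using assms(3,4) by (simp_all add: best_reply_mem)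
  then show "strat1 PP A B m (\<lambda>_. pure_at a)" "strat2 PP A B m (\<lambda>_. pure_at b)"
    by (auto simp: strat1_def strat2_def avail1_def avail2_def pure_strat_iff)
  have follow: "rval A B u (\<lambda>_. pure_at a) (\<lambda>_. pure_at b) m [] = real m * u a b" for u
    using assms(1,2) mem by (intro rval_constant) auto
  show "rval A B u1 s1' (\<lambda>_. pure_at b) m [] \<le> rval A B u1 (\<lambda>_. pure_at a) (\<lambda>_. pure_at b) m []"
    if "strat1 PP A B m s1'" for s1'
    unfolding follow using assms mem that by (intro rval_le_pure_right) (auto simp: best_reply1_def)
  show "rval A B u2 (\<lambda>_. pure_at a) s2' m [] \<le> rval A B u2 (\<lambda>_. pure_at a) (\<lambda>_. pure_at b) m []"
    if "strat2 PP A B m s2'" for s2'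
    unfolding follow using assms mem that by (intro rval_le_pure_left) (auto simp: best_reply2_def)
qed

text \<open>Histories grow at the end, so \<open>hd h\<close> is the first round: the strategy opens with
  \<open>x0\<close> and then plays \<open>xH\<close> forever if player 2 opened with \<open>b0\<close>, and \<open>xL\<close> otherwise.\<close>
definition trigger :: "'x \<Rightarrow> 'x \<Rightarrow> 'x \<Rightarrow> 'b \<Rightarrow> ('a \<times> 'b) list \<Rightarrow> 'x \<Rightarrow> real" where
  "trigger x0 xH xL b0 h =
    (if h = [] then pure_at x0 else if snd (hd h) = b0 then pure_at xH else pure_at xL)"

lemma cont_trigger:
  "h \<noteq> [] \<Longrightarrow> cont (trigger x0 xH xL b0) h = (\<lambda>_. pure_at (if snd (hd h) = b0 then xH else xL))"
  by (auto simp: cont_def trigger_def)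

context
  fixes A1 :: "'a set" and A2 :: "'b set" and u1 u2 :: "'a \<Rightarrow> 'b \<Rightarrow> real"
    and aH aL a0 :: 'a and bH bL b0 :: 'b
  assumes fin: "finite A1" "finite A2"
    and H: "best_reply1 A1 u1 bH aH" "best_reply2 A2 u2 aH bH"
    and L: "best_reply1 A1 u1 bL aL" "best_reply2 A2 u2 aL bL"
    and a0: "best_reply1 A1 u1 b0 a0" and b0: "b0 \<in> A2"
begin

lemma trigger_actions_mem: "aH \<in> A1" "aL \<in> A1" "a0 \<in> A1" "bH \<in> A2" "bL \<in> A2"
  using H L a0 by (simp_all add: best_reply_mem)

lemma rval_trigger:
  "rval A1 A2 u (trigger a0 aH aL b0) (trigger b0 bH bL b0) (Suc k) [] = u a0 b0 + real k * u aH bH"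
proof -
  let ?s1 = "trigger a0 aH aL b0" and ?s2 = "trigger b0 bH bL b0"
  have "rval A1 A2 u ?s1 ?s2 (Suc k) [] = u a0 b0 + rval A1 A2 u ?s1 ?s2 k [(a0, b0)]"
    using fin trigger_actions_mem b0
    by (intro rval_Suc_pure[where h="[]", simplified]) (auto simp: trigger_def)
  also have "rval A1 A2 u ?s1 ?s2 k [(a0, b0)] = real k * u aH bH"
    using fin trigger_actions_mem by (intro rval_constant) (auto simp: trigger_def)
  finally show ?thesis .
qed

lemma trigger_deviation1_le:
  assumes s1': "strat1 PP A1 A2 (Suc k) s1'"
  shows "rval A1 A2 u1 s1' (trigger b0 bH bL b0) (Suc k) [] \<le> u1 a0 b0 + real k * u1 aH bH"
proof -
  let ?s2 = "trigger b0 bH bL b0"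
  obtain a' where a': "a' \<in> A1" "s1' [] = pure_at a'"
    using s1' by (force simp: strat1_def avail1_def pure_strat_iff)
  have "rval A1 A2 u1 s1' ?s2 k [(a', b0)] = rval A1 A2 u1 (cont s1' [(a', b0)]) (\<lambda>_. pure_at bH) k []"
    using cont_trigger[of "[(a', b0)]" b0 bH bL b0] rval_cont[of A1 A2 u1 s1' "[(a', b0)]" ?s2 k "[]"]
    by simp
  also have "\<dots> \<le> real k * u1 aH bH"
    using fin trigger_actions_mem H strat1_cont[OF s1', of "[(a', b0)]"] a' b0
    by (intro rval_le_pure_right) (auto simp: best_reply1_def)
  moreover have "rval A1 A2 u1 s1' ?s2 (Suc k) [] = u1 a' b0 + rval A1 A2 u1 s1' ?s2 k [(a', b0)]"
    using fin a' b0 by (intro rval_Suc_pure[where h="[]", simplified]) (auto simp: trigger_def)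
  moreover have "u1 a' b0 \<le> u1 a0 b0" using a0 a' by (simp add: best_reply1_def)
  ultimately show ?thesis by simp
qed

lemma trigger_deviation2_le:
  assumes k: "Max (u2 a0 ` A2) - u2 a0 b0 \<le> real k * (u2 aH bH - u2 aL bL)"
    and s2': "strat2 PP A1 A2 (Suc k) s2'"
  shows "rval A1 A2 u2 (trigger a0 aH aL b0) s2' (Suc k) [] \<le> u2 a0 b0 + real k * u2 aH bH"
proof -
  let ?s1 = "trigger a0 aH aL b0"
  obtain b' where b': "b' \<in> A2" "s2' [] = pure_at b'"
    using s2' by (force simp: strat2_def avail2_def pure_strat_iff)
  define aC where "aC = (if b' = b0 then aH else aL)"
  define bC where "bC = (if b' = b0 then bH else bL)"
  have "rval A1 A2 u2 ?s1 s2' k [(a0, b')] = rval A1 A2 u2 (\<lambda>_. pure_at aC) (cont s2' [(a0, b')]) k []"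
    using cont_trigger[of "[(a0, b')]" a0 aH aL b0] rval_cont[of A1 A2 u2 ?s1 "[(a0, b')]" s2' k "[]"]
    by (simp add: aC_def)
  also have "\<dots> \<le> real k * u2 aC bC"
    using fin trigger_actions_mem H L strat2_cont[OF s2', of "[(a0, b')]"] b'
    by (intro rval_le_pure_left) (auto simp: best_reply2_def aC_def bC_def)
  moreover have "rval A1 A2 u2 ?s1 s2' (Suc k) [] = u2 a0 b' + rval A1 A2 u2 ?s1 s2' k [(a0, b')]"
    using fin trigger_actions_mem b' by (intro rval_Suc_pure[where h="[]", simplified]) (auto simp: trigger_def)
  moreover have "u2 a0 b' + real k * u2 aC bC \<le> u2 a0 b0 + real k * u2 aH bH"
  proof (cases "b' = b0")
    case False
    have "u2 a0 b' \<le> Max (u2 a0 ` A2)" using fin b' by simp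
    with k False show ?thesis by (simp add: aC_def bC_def algebra_simps)
  qed (simp add: aC_def bC_def)
  ultimately show ?thesis by simp
qed

lemma rep_nash_trigger:
  assumes "Max (u2 a0 ` A2) - u2 a0 b0 \<le> real k * (u2 aH bH - u2 aL bL)"
  shows "rep_nash PP A1 A2 u1 u2 (Suc k) (trigger a0 aH aL b0) (trigger b0 bH bL b0)"
  using trigger_actions_mem b0 trigger_deviation1_le trigger_deviation2_le[OF assms]
  by (auto simp: rep_nash_def rval_trigger strat1_def strat2_def avail1_def avail2_def
      pure_strat_iff trigger_def)

lemma SPE_trigger:
  assumes "Max (u2 a0 ` A2) - u2 a0 b0 \<le> real k * (u2 aH bH - u2 aL bL)"
  shows "SPE PP A1 A2 u1 u2 (Suc k) (trigger a0 aH aL b0) (trigger b0 bH bL b0)"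
  unfolding SPE_def
proof (intro allI impI)
  fix h :: "('a \<times> 'b) list"
  show "rep_nash PP A1 A2 u1 u2 (Suc k - length h)
      (cont (trigger a0 aH aL b0) h) (cont (trigger b0 bH bL b0) h)"
  proof (cases "h = []")
    case True
    then show ?thesis using rep_nash_trigger[OF assms] by simp
  next
    case False
    then show ?thesis using fin H L by (simp add: cont_trigger rep_nash_PP_repeat)
  qed
qed

lemma in_GLS_PP_if_not_best_reply2:
  assumes "u2 aL bL < u2 aH bH" "\<not> best_reply2 A2 u2 a0 b0"
  shows "in_GLS PP A1 A2 u1 u2"
proof -
  obtain k :: nat where k: "Max (u2 a0 ` A2) - u2 a0 b0 < real k * (u2 aH bH - u2 aL bL)"
    using reals_Archimedean3[of "u2 aH bH - u2 aL bL"] assms(1) by auto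
  have "\<not> stage_nash PP A1 A2 u1 u2 (trigger a0 aH aL b0 []) (trigger b0 bH bL b0 [])"
    using fin assms(2) by (simp add: stage_nash_PP_iff trigger_def)
  then show ?thesis
    using SPE_trigger[OF less_imp_le[OF k]] unfolding in_GLS_def by (intro exI[of _ "Suc k"]) force
qed

end

lemma rep_nash_MP_stage:
  assumes fin: "finite A1" "finite A2"
    and cond: "\<And>a b. b \<in> A2 \<Longrightarrow> best_reply1 A1 u1 b a \<Longrightarrow> best_reply2 A2 u2 a b \<and> u1 a b = v"
    and eq: "rep_nash MP A1 A2 u1 u2 (Suc k) s1 s2"
    and cont_val: "\<And>a b. a \<in> A1 \<Longrightarrow> b \<in> A2 \<Longrightarrow> rval A1 A2 u1 s1 s2 k [(a, b)] = real k * v"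
  shows "rval A1 A2 u1 s1 s2 (Suc k) [] = real (Suc k) * v \<and> stage_nash MP A1 A2 u1 u2 (s1 []) (s2 [])"
proof -
  have S1: "strat1 MP A1 A2 (Suc k) s1" and S2: "strat2 MP A1 A2 (Suc k) s2"
    using eq by (simp_all add: rep_nash_def)
  have mixed: "mixed A1 (s1 [])" using mixed_if_strat1[OF fin(1) S1, of "[]"] by simp
  obtain b where b: "b \<in> A2" "s2 [] = pure_at b"
    using S2 by (force simp: strat2_def avail2_def pure_strat_iff)
  define E where "E = (\<Sum>x\<in>A1. s1 [] x * u1 x b)"
  have payoff: "rval A1 A2 u1 s1 s2 (Suc k) [] = E + real k * v"
  proof -
    have "rval A1 A2 u1 s1 s2 (Suc k) [] = (\<Sum>x\<in>A1. s1 [] x * u1 x b + s1 [] x * (real k * v))"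
      using fin b cont_val
      by (simp add: rval_Suc_pure_right[where h="[]", simplified] algebra_simps cong: sum.cong)
    also have "\<dots> = E + real k * v"
      using mixed by (simp add: E_def sum.distrib mixed_def flip: sum_distrib_right)
    finally show ?thesis .
  qed
  have deviation: "u1 a b \<le> E" if "a \<in> A1" for a
  proof -
    let ?s1' = "s1([] := pure_at a)"
    have "strat1 MP A1 A2 (Suc k) ?s1'"
      using S1 fin that by (simp add: strat1_def avail1_def mixed_pure_at)
    then have "rval A1 A2 u1 ?s1' s2 (Suc k) [] \<le> E + real k * v"
      using eq payoff by (simp add: rep_nash_def)
    moreover have "rval A1 A2 u1 ?s1' s2 k [(a, b)] = rval A1 A2 u1 s1 s2 k [(a, b)]"
      by (rule rval_cong) simp_all
    ultimately show ?thesis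
      using fin that b cont_val by (simp add: rval_Suc_pure[where h="[]", simplified])
  qed
  have support: "best_reply1 A1 u1 b x \<and> u1 x b = E" if "x \<in> A1" "0 < s1 [] x" for x
    using mixed_support_maximizes[OF fin(1) mixed _ that, of "\<lambda>x. u1 x b"] deviation that
    by (auto simp: best_reply1_def E_def)
  obtain x0 where x0: "x0 \<in> A1" "0 < s1 [] x0" using mixed by (rule mixed_support_nonempty)
  have "E = v" using support[OF x0] cond[OF b(1)] by metis
  moreover have "stage_nash MP A1 A2 u1 u2 (s1 []) (pure_at b)"
    using fin mixed b(1) support cond[OF b(1)] by (intro stage_nash_MP_if_support_best_replies) auto
  ultimately show ?thesis using payoff b(2) by (simp add: algebra_simps)
qed

lemma SPE_MP_continuation:
  assumes fin: "finite A1" "finite A2"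
    and cond: "\<And>a b. b \<in> A2 \<Longrightarrow> best_reply1 A1 u1 b a \<Longrightarrow> best_reply2 A2 u2 a b \<and> u1 a b = v"
    and spe: "SPE MP A1 A2 u1 u2 T s1 s2"
  shows "is_hist A1 A2 h \<Longrightarrow> length h + m = T \<Longrightarrow>
    rval A1 A2 u1 s1 s2 m h = real m * v \<and> (0 < m \<longrightarrow> stage_nash MP A1 A2 u1 u2 (s1 h) (s2 h))"
proof (induction m arbitrary: h)
  case (Suc k)
  have "rep_nash MP A1 A2 u1 u2 (Suc k) (cont s1 h) (cont s2 h)"
  proof -
    have "length h < T" "T - length h = Suc k" using Suc.prems(2) by auto
    then show ?thesis using spe Suc.prems(1) unfolding SPE_def by metis
  qed
  moreover have "rval A1 A2 u1 (cont s1 h) (cont s2 h) k [(a, b)] = real k * v"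
    if "a \<in> A1" "b \<in> A2" for a b
    using Suc.IH[of "h @ [(a, b)]"] Suc.prems that by (simp add: rval_cont)
  ultimately have "rval A1 A2 u1 (cont s1 h) (cont s2 h) (Suc k) [] = real (Suc k) * v \<and>
      stage_nash MP A1 A2 u1 u2 (cont s1 h []) (cont s2 h [])"
    by (intro rep_nash_MP_stage[OF fin cond]) auto
  then show ?case by (simp add: rval_cont) (simp add: cont_def)
qed simp

theorem mainTheorem9:
  fixes A1 :: "'a set" and A2 :: "'b set" and u1 u2 :: "'a \<Rightarrow> 'b \<Rightarrow> real"
  assumes "finite A1" "A1 \<noteq> {}" "finite A2" "A2 \<noteq> {}"
    and "card (V1 PP A1 A2 u1 u2) = 1"
    and "card (V2 PP A1 A2 u1 u2) > 1"
    and "\<not> in_GLS PP A1 A2 u1 u2"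
  shows "\<not> in_GLS MP A1 A2 u1 u2"
proof
  assume "in_GLS MP A1 A2 u1 u2"
  then obtain T s1 s2 h where spe: "SPE MP A1 A2 u1 u2 T s1 s2"
    and h: "is_hist A1 A2 h" "length h < T" and ls: "\<not> stage_nash MP A1 A2 u1 u2 (s1 h) (s2 h)"
    unfolding in_GLS_def by blast
  have fin: "finite A1" "finite A2" using assms(1,3) .
  obtain v where v: "V1 PP A1 A2 u1 u2 = {v}" using assms(5) by (rule card_1_singletonE)
  obtain aH bH aL bL where H: "best_reply1 A1 u1 bH aH" "best_reply2 A2 u2 aH bH"
    and L: "best_reply1 A1 u1 bL aL" "best_reply2 A2 u2 aL bL" and "u2 aL bL < u2 aH bH"
  proof -
    obtain x y where "x \<in> V2 PP A1 A2 u1 u2" "y \<in> V2 PP A1 A2 u1 u2" "x < y"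
      using assms(6) by (rule card_gt_1_obtain_less)
    then show thesis using that unfolding V2_PP[OF fin] by auto
  qed
  have cond: "best_reply2 A2 u2 a b \<and> u1 a b = v" if "b \<in> A2" "best_reply1 A1 u1 b a" for a b
  proof
    show br2: "best_reply2 A2 u2 a b"
      using in_GLS_PP_if_not_best_reply2[OF fin H L that(2,1) \<open>u2 aL bL < u2 aH bH\<close>] assms(7)
      by blast
    show "u1 a b = v" using v that(2) br2 unfolding V1_PP[OF fin] by blast
  qed
  have "length h + (T - length h) = T" "0 < T - length h" using h(2) by auto
  then show False using SPE_MP_continuation[OF fin cond spe h(1), of "T - length h"] ls by blast
qed

end
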